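(* Let $p>2$ be a prime, $n\ge1$, $A$ a finite abelian $p$-group and $G$ a group containing $A$ as a normal subgroup with $G/A\cong\mathbb{Z}_{p^n}$, generated by the image of an element $t\in G$. If $[e]_\varphi$ is a subgroup of $G$ for every $\varphi\in{\rm Aut}\,G$, then there is a homomorphism $\theta:A\to\Omega_n(A)$ such that $t^{-1}at=a\,\theta(a)$ for all $a\in A$, and $\theta(\Omega_k(A))\le\Omega_{k-1}(A)$ for all $1\le k\le n$.
   Context: For an automorphism $\varphi$ of $G$, $[e]_\varphi=\{z^{-1}\varphi(z)\mid z\in G\}$. $\Omega_k(A)=\{a\in A\mid a^{p^k}=e\}$; in particular $\Omega_0(A)=\{e\}$. *)

theory Defs
  imports "HOL-Algebra.Algebra"
begin

definition Omega :: "('a, 'b) monoid_scheme \<Rightarrow> nat \<Rightarrow> 'a set \<Rightarrow> nat \<Rightarrow> 'a set" where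
  "Omega G p A k = {a \<in> A. a [^]\<^bsub>G\<^esub> (p ^ k) = \<one>\<^bsub>G\<^esub>}"

definition twisted_class_e :: "('a, 'b) monoid_scheme \<Rightarrow> ('a \<Rightarrow> 'a) \<Rightarrow> 'a set" where
  "twisted_class_e G \<phi> = {inv\<^bsub>G\<^esub> z \<otimes>\<^bsub>G\<^esub> \<phi> z | z. z \<in> carrier G}"

end

theory Submission
  imports Defs
begin

text \<open>
  Let \<open>\<sigma>\<close> be conjugation by \<open>t\<close> on \<open>A\<close> and \<open>\<theta> a = a\<inverse> \<sigma>(a)\<close>, so that \<open>\<sigma> = 1 + \<theta>\<close> in the
  endomorphism ring of \<open>A\<close>. For the inner automorphism induced by \<open>a \<in> A\<close>, the class \<open>[e]\<close>
  consists of the elements \<open>t\<^sup>-\<^sup>i a t\<^sup>i a\<inverse>\<close> with \<open>i < p\<^sup>n\<close>; being a subgroup of order at most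
  \<open>p\<^sup>n\<close> that contains \<open>\<theta>(a)\<close>, it forces \<open>\<theta>(a)\<^bsup>p\<^sup>n\<^esup> = e\<close>.

  On \<open>\<Omega>\<^sub>1(A)\<close> we have \<open>1 = \<sigma>\<^bsup>p\<^sup>n\<^esup> = (1 + \<theta>)\<^bsup>p\<^sup>n\<^esup> = 1 + \<theta>\<^bsup>p\<^sup>n\<^esup>\<close>, so \<open>\<theta>\<close> is nilpotent there.
  If \<open>\<theta>\<close> did not vanish on \<open>\<Omega>\<^sub>1(A)\<close>, there would be \<open>b\<close> with \<open>b\<^sup>p = e\<close>, \<open>c = \<theta>(b) \<noteq> e\<close> and
  \<open>\<theta>(c) = e\<close>. Then \<open>A t\<^sup>i \<ni> g \<mapsto> g t\<^sup>-\<^sup>i (tb)\<^sup>i = g b\<^sup>i c\<^bsup>i(i-1)/2\<^esup>\<close> is an automorphism whose class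
  \<open>[e]\<close> contains \<open>b\<close> but, as \<open>p\<close> is odd, not \<open>b\<^sup>2\<close>. Hence \<open>\<theta>(\<Omega>\<^sub>1(A)) = e\<close>, and
  \<open>\<theta>(\<Omega>\<^sub>k(A)) \<le> \<Omega>\<^sub>k\<^sub>-\<^sub>1(A)\<close> follows by induction on \<open>k\<close> from \<open>\<theta>(a)\<^sup>p = \<theta>(a\<^sup>p)\<close>.
\<close>

lemma choose_two_double: "2 * (i choose 2) + i = i * i"
proof (induction i)
  case (Suc i)
  have "Suc i choose 2 = i + (i choose 2)"
    using binomial_Suc_Suc[of i 1] by (simp add: numeral_2_eq_2)
  with Suc show ?case by simp
qed simp

lemma choose_two_mod_odd:
  fixes m :: nat
  assumes "odd m" and "i mod m = j mod m"
  shows "(i choose 2) mod m = (j choose 2) mod m"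
proof -
  have ij: "int m dvd int i - int j"
    using assms(2) by (metis mod_eq_dvd_iff of_nat_mod)
  have "2 * (int (i choose 2) - int (j choose 2)) = (int i - int j) * (int i + int j - 1)"
    using arg_cong[OF choose_two_double[of i], of int] arg_cong[OF choose_two_double[of j], of int]
    by (simp add: algebra_simps)
  with ij have "int m dvd 2 * (int (i choose 2) - int (j choose 2))" by simp
  moreover have "coprime (int m) 2" using assms(1) by simp
  ultimately have "int m dvd int (i choose 2) - int (j choose 2)"
    using coprime_dvd_mult_right_iff by blast
  then show ?thesis by (metis mod_eq_dvd_iff of_nat_eq_iff of_nat_mod)
qed

lemma prime_dvd_prime_power_choose:
  fixes p :: nat
  assumes "Factorial_Ring.prime p" "0 < j" "j < p ^ n"
  shows "p dvd (p ^ n choose j)"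
proof (rule ccontr)
  assume "\<not> p dvd (p ^ n choose j)"
  then have "coprime (p ^ n) (p ^ n choose j)"
    using assms(1) by (simp add: prime_imp_coprime)
  moreover have "p ^ n dvd j * (p ^ n choose j)"
    using times_binomial_minus1_eq[OF assms(2)] by simp
  ultimately have "p ^ n dvd j" using coprime_dvd_mult_left_iff by blast
  then show False using assms(2,3) by (simp add: nat_dvd_not_less)
qed

lemma (in group) inv_mult_cancel_left [simp]:
  "x \<in> carrier G \<Longrightarrow> y \<in> carrier G \<Longrightarrow> inv x \<otimes> (x \<otimes> y) = y"
  by (simp add: m_assoc[symmetric])

lemma (in group) mult_inv_cancel_left [simp]:
  "x \<in> carrier G \<Longrightarrow> y \<in> carrier G \<Longrightarrow> x \<otimes> (inv x \<otimes> y) = y"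
  by (simp add: m_assoc[symmetric])

lemma (in group) nat_pow_eq_iff_mod_ord:
  assumes "x \<in> carrier G"
  shows "x [^] (i::nat) = x [^] (j::nat) \<longleftrightarrow> i mod ord x = j mod ord x"
  using int_pow_eq[OF assms, of "int i" "int j"]
  by (metis int_ops(9) int_pow_int mod_eq_dvd_iff nat_int_comparison(1))

lemma (in group) nat_pow_eq_if_mod_eq:
  assumes "x \<in> carrier G" "x [^] (m::nat) = \<one>" "i mod m = j mod m"
  shows "x [^] (i::nat) = x [^] (j::nat)"
proof -
  have "ord x dvd m" using assms(1,2) pow_eq_id by blast
  then show ?thesis using assms(1,3) by (metis nat_pow_eq_iff_mod_ord mod_mod_cancel)
qed

lemma (in group) ord_eq_prime:
  fixes p :: nat
  assumes "x \<in> carrier G" "Factorial_Ring.prime p" "x [^] p = \<one>" "x \<noteq> \<one>"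
  shows "ord x = p"
proof -
  have "ord x dvd p" using pow_eq_id[OF assms(1)] assms(3) by simp
  moreover have "ord x \<noteq> 1" using ord_eq_1[OF assms(1)] assms(4) by simp
  ultimately show ?thesis using assms(2) unfolding prime_nat_iff by blast
qed

lemma (in group) pow_prime_power_eq_one:
  fixes p :: nat
  assumes x: "x \<in> carrier G" and p: "Factorial_Ring.prime p"
    and "x [^] (p ^ m) = \<one>" "x [^] d = \<one>" "0 < d" "d \<le> p ^ n"
  shows "x [^] (p ^ n) = \<one>"
proof -
  have "ord x dvd p ^ m" using assms(3) pow_eq_id[OF x] by simp
  then obtain s where s: "ord x = p ^ s" using divides_primepow_nat[OF p] by blast
  have "p ^ s \<le> p ^ n"
    using assms(4-6) pow_eq_id[OF x] s by (metis dvd_imp_le le_trans)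
  then have "s \<le> n" using p by (metis power_le_imp_le_exp prime_gt_1_nat)
  then show ?thesis using pow_eq_id[OF x] s by (simp add: le_imp_power_dvd)
qed

lemma (in group) subgroup_pow_card_eq_one:
  assumes "subgroup H G" "finite H" "x \<in> H"
  shows "x [^] card H = \<one>"
proof -
  interpret H: group "G\<lparr>carrier := H\<rparr>" using subgroup_imp_group[OF assms(1)] .
  have "x [^]\<^bsub>G\<lparr>carrier := H\<rparr>\<^esub> order (G\<lparr>carrier := H\<rparr>) = \<one>"
    using H.pow_order_eq_1 assms(3) by simp
  then show ?thesis by (simp add: order_def flip: nat_pow_consistent)
qed

lemma (in group) conjugation_iso:
  assumes a: "a \<in> carrier G"
  shows "(\<lambda>z. a \<otimes> z \<otimes> inv a) \<in> iso G G"
proof -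
  have "(\<lambda>z. a \<otimes> z \<otimes> inv a) \<in> hom G G"
    unfolding hom_def using a by (auto simp: m_assoc)
  moreover have "bij_betw (\<lambda>z. a \<otimes> z \<otimes> inv a) (carrier G) (carrier G)"
    by (rule bij_betwI[where g = "\<lambda>z. inv a \<otimes> z \<otimes> a"]) (use a in \<open>auto simp: m_assoc\<close>)
  ultimately show ?thesis by (simp add: iso_def)
qed

lemma (in comm_group) hom_finprod:
  assumes f: "f \<in> hom G G" and "finite I" and h: "h \<in> I \<rightarrow> carrier G"
  shows "f (finprod G h I) = finprod G (\<lambda>i. f (h i)) I"
  using assms(2,3)
proof (induction I rule: finite_induct)
  case (insert i I)
  have "f (h i) \<in> carrier G" "(\<lambda>i. f (h i)) \<in> I \<rightarrow> carrier G"
    using insert.prems f hom_in_carrier by fastforce+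
  with insert f show ?case by (simp add: hom_mult finprod_closed)
qed (use f in \<open>simp add: hom_one\<close>)

lemma (in group) funpow_hom_closed:
  "f \<in> hom G G \<Longrightarrow> x \<in> carrier G \<Longrightarrow> (f ^^ j) x \<in> carrier G"
  by (induction j) (auto intro: hom_in_carrier)

lemma (in comm_group) funpow_mult_hom_binomial:
  assumes f: "f \<in> hom G G" and x: "x \<in> carrier G"
  shows "((\<lambda>y. y \<otimes> f y) ^^ m) x = (\<Otimes>j\<in>{..m}. (f ^^ j) x [^] (m choose j))"
proof (induction m)
  case (Suc m)
  have fj: "(f ^^ j) x \<in> carrier G" "f ((f ^^ j) x) \<in> carrier G" for j
    using funpow_hom_closed[OF f x, of j] funpow_hom_closed[OF f x, of "Suc j"] by simp_all
  define F where "F = (\<lambda>j. (f ^^ j) x [^] (m choose j))"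
  define P where "P = (\<Otimes>j\<in>{..m}. F j)"
  define Q where "Q = (\<Otimes>i\<in>{..m}. (f ^^ Suc i) x [^] (m choose Suc i))"
  have Fc: "F \<in> UNIV \<rightarrow> carrier G" using fj by (simp add: F_def)
  have Pc: "P \<in> carrier G" using Fc by (simp add: P_def Pi_def finprod_closed)
  have Qc: "Q \<in> carrier G" using fj by (simp add: Q_def Pi_def)
  have fP: "f P = (\<Otimes>i\<in>{..m}. (f ^^ Suc i) x [^] (m choose i))"
    unfolding P_def using hom_finprod[OF f, of "{..m}" F] Fc
    by (simp add: F_def hom_nat_pow[OF f] fj)
  have PQ: "P = Q \<otimes> x"
  proof -
    have "(\<Otimes>j\<in>{..Suc m}. F j) = F (Suc m) \<otimes> P"
      using Fc by (simp add: P_def Pi_def)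
    also have "\<dots> = P" using Pc by (simp add: F_def binomial_eq_0)
    finally have "(\<Otimes>j\<in>{..Suc m}. F j) = P" .
    moreover have "(\<Otimes>j\<in>{..Suc m}. F j) = (\<Otimes>i\<in>{..m}. F (Suc i)) \<otimes> F 0"
      using Fc by (intro finprod_Suc2) (simp add: Pi_def)
    ultimately show ?thesis using x by (simp add: F_def Q_def)
  qed
  have "(\<Otimes>j\<in>{..Suc m}. (f ^^ j) x [^] (Suc m choose j))
        = (\<Otimes>i\<in>{..m}. (f ^^ Suc i) x [^] (Suc m choose Suc i)) \<otimes> x"
    using fj x by (subst finprod_Suc2) (auto simp: Pi_def)
  also have "\<dots> = (\<Otimes>i\<in>{..m}. (f ^^ Suc i) x [^] (m choose i) \<otimes> (f ^^ Suc i) x [^] (m choose Suc i)) \<otimes> x"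
    using fj by (simp add: nat_pow_mult)
  also have "\<dots> = f P \<otimes> Q \<otimes> x"
    unfolding fP Q_def using fj by (subst finprod_multf) (auto simp: Pi_def)
  also have "\<dots> = P \<otimes> f P"
  proof -
    have "f P \<in> carrier G" using hom_in_carrier[OF f Pc] .
    then show ?thesis using PQ Qc x by (simp add: m_ac)
  qed
  finally show ?case using Suc by (simp add: P_def F_def)
qed (use x in simp)

lemma (in comm_group) funpow_mult_hom_prime_power:
  fixes p :: nat
  assumes p: "Factorial_Ring.prime p" and f: "f \<in> hom G G" and x: "x \<in> carrier G" "x [^] p = \<one>"
  shows "((\<lambda>y. y \<otimes> f y) ^^ (p ^ n)) x = (f ^^ (p ^ n)) x \<otimes> x"
proof -
  define q where "q = p ^ n"
  define F where "F = (\<lambda>j. (f ^^ j) x [^] (q choose j))"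
  have fjx: "(f ^^ j) x \<in> carrier G" for j using funpow_hom_closed[OF f x(1)] .
  have Fc: "F \<in> UNIV \<rightarrow> carrier G" using fjx by (simp add: F_def)
  have fj_pow: "(f ^^ j) x [^] p = \<one>" for j
  proof (induction j)
    case (Suc j)
    then show ?case using f fjx hom_nat_pow[OF f, of "(f ^^ j) x" p] by (simp add: hom_one)
  qed (simp add: x)
  have F_one: "F j = \<one>" if j: "0 < j" "j < q" for j
  proof -
    obtain c where "q choose j = p * c"
      using prime_dvd_prime_power_choose[OF p j[unfolded q_def]] unfolding q_def by blast
    then show ?thesis using fj_pow fjx by (simp add: F_def nat_pow_pow[symmetric])
  qed
  obtain r where r: "q = Suc r" using p unfolding q_def by (metis gr0_implies_Suc prime_gt_0_nat zero_less_power)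
  have "((\<lambda>y. y \<otimes> f y) ^^ q) x = F q \<otimes> finprod G F {..r}"
    unfolding funpow_mult_hom_binomial[OF f x(1)] F_def[symmetric]
    using finprod_Suc[of F r] Fc r by (auto simp: Pi_def)
  also have "finprod G F {..r} = F 0 \<otimes> finprod G F {Suc 0..r}"
    using finprod_0'[of F r] Fc by (auto simp: Pi_def)
  also have "finprod G F {Suc 0..r} = \<one>"
    using finprod_one_eqI[of "{Suc 0..r}" F] F_one r by auto
  finally show ?thesis using x fjx by (simp add: F_def q_def)
qed

locale abelian_by_cyclic = normal A G for A and G (structure) +
  fixes t :: 'a and q :: nat
  assumes abelian: "\<And>a b. a \<in> A \<Longrightarrow> b \<in> A \<Longrightarrow> a \<otimes> b = b \<otimes> a"
    and gen_closed: "t \<in> carrier G"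
    and gen_pow_mem_iff: "\<And>k. t [^] k \<in> A \<longleftrightarrow> q dvd k"
    and coset_rep: "\<And>g. g \<in> carrier G \<Longrightarrow> \<exists>i<q. g \<otimes> inv (t [^] i) \<in> A"

lemma (in normal) abelian_by_cyclicI:
  assumes abelian: "\<And>a b. a \<in> H \<Longrightarrow> b \<in> H \<Longrightarrow> a \<otimes> b = b \<otimes> a"
    and t: "t \<in> carrier G" and q: "q > 0"
    and card: "card (carrier (G Mod H)) = q"
    and gen: "generate (G Mod H) {H #> t} = carrier (G Mod H)"
  shows "abelian_by_cyclic H G t q"
proof -
  interpret Q: group "G Mod H" by (rule factorgroup_is_group)
  have Ht: "H #> t \<in> carrier (G Mod H)" using t by (auto simp: carrier_FactGroup)
  have Q_fin: "finite (carrier (G Mod H))" using card q card.infinite by fastforce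
  have Ht_pow: "(H #> t) [^]\<^bsub>G Mod H\<^esub> k = H #> t [^] k" for k :: nat
    using FactGroup_pow[OF t] by (simp add: FactGroup_def)
  have coset_eq_iff: "H #> g = H \<longleftrightarrow> g \<in> H" if "g \<in> carrier G" for g
    using that coset_join2[of g H] rcos_self[of g H] subgroup_axioms by auto
  have pow_mem_iff: "t [^] k \<in> H \<longleftrightarrow> q dvd k" for k :: nat
  proof -
    have "Q.ord (H #> t) = q"
      using Q.generate_pow_card[OF Ht] gen card by simp
    then show ?thesis
      using Q.pow_eq_id[OF Ht, of k] Ht_pow coset_eq_iff t by simp
  qed
  have "\<exists>i<q. g \<otimes> inv (t [^] i) \<in> H" if g: "g \<in> carrier G" for g
  proof -
    have "H #> g \<in> {(H #> t) [^]\<^bsub>G Mod H\<^esub> k | k. k \<in> (UNIV :: nat set)}"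
      using g gen Q.generate_pow_on_finite_carrier[OF Q_fin Ht] by (auto simp: carrier_FactGroup)
    then obtain k :: nat where "H #> g = H #> t [^] k" using Ht_pow by auto
    then have "g \<in> H #> t [^] k" using rcos_self[OF g subgroup_axioms] by simp
    then obtain a where a: "a \<in> H" "g = a \<otimes> t [^] k" unfolding r_coset_def by auto
    have "t [^] k = t [^] (q * (k div q)) \<otimes> t [^] (k mod q)"
      using t by (simp add: nat_pow_mult)
    then have "g \<otimes> inv (t [^] (k mod q)) = a \<otimes> t [^] (q * (k div q))"
      using a t subset by (auto simp: m_assoc)
    also have "\<dots> \<in> H"
      using a(1) pow_mem_iff[of "q * (k div q)"] subgroup.m_closed[OF subgroup_axioms] by simp
    finally have "g \<otimes> inv (t [^] (k mod q)) \<in> H" .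
    moreover have "k mod q < q" using q by simp
    ultimately show ?thesis by blast
  qed
  with pow_mem_iff show ?thesis
    by unfold_locales (use abelian t in auto)
qed

context abelian_by_cyclic
begin

abbreviation GA where "GA \<equiv> G\<lparr>carrier := A\<rparr>"

lemma mem_carrier: "x \<in> A \<Longrightarrow> x \<in> carrier G"
  using subset by auto

lemma A_mult_closed: "x \<in> A \<Longrightarrow> y \<in> A \<Longrightarrow> x \<otimes> y \<in> A"
  using subgroup.m_closed[OF subgroup_axioms] by blast

lemma A_inv_closed: "x \<in> A \<Longrightarrow> inv x \<in> A"
  using subgroup.m_inv_closed[OF subgroup_axioms] by blast

lemma A_pow_closed: "x \<in> A \<Longrightarrow> x [^] (k::nat) \<in> A"
  by (induction k) (use subgroup.one_closed[OF subgroup_axioms] A_mult_closed in auto)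

lemma comm_group_GA: "comm_group GA"
  using group.group_comm_groupI[OF subgroup_imp_group[OF subgroup_axioms]] abelian by auto

lemma gen_pow_q_mem: "t [^] q \<in> A"
  using gen_pow_mem_iff by simp

lemma coset_rep_mod:
  assumes g: "g \<in> carrier G" and "g \<otimes> inv (t [^] i) \<in> A" "g \<otimes> inv (t [^] j) \<in> A"
  shows "i mod q = j mod q"
proof -
  have "q dvd j - i" if ij: "i \<le> j" "g \<otimes> inv (t [^] i) \<in> A" "g \<otimes> inv (t [^] j) \<in> A" for i j
  proof -
    have "inv (g \<otimes> inv (t [^] i)) \<otimes> (g \<otimes> inv (t [^] j)) \<in> A"
      using ij A_inv_closed A_mult_closed by blast
    also have "inv (g \<otimes> inv (t [^] i)) \<otimes> (g \<otimes> inv (t [^] j)) = inv (t [^] (j - i))"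
    proof -
      have "t [^] j = t [^] (j - i) \<otimes> t [^] i"
        using gen_closed ij(1) by (simp add: nat_pow_mult)
      then show ?thesis using g gen_closed by (simp add: inv_mult_group m_assoc)
    qed
    finally have "inv (inv (t [^] (j - i))) \<in> A" by (rule A_inv_closed)
    then show ?thesis using gen_closed gen_pow_mem_iff by simp
  qed
  then show ?thesis using assms
    by (metis linorder_le_cases mod_eq_dvd_iff_nat)
qed

lemma conj_coset_rep:
  assumes z: "z \<in> carrier G" and zi: "z \<otimes> inv (t [^] (i::nat)) \<in> A" and a: "a \<in> A"
  shows "inv z \<otimes> a \<otimes> z = inv (t [^] i) \<otimes> a \<otimes> t [^] i"
proof -
  define c where "c = z \<otimes> inv (t [^] i)"
  have c: "c \<in> A" "c \<in> carrier G" using zi mem_carrier by (auto simp: c_def)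
  have z_eq: "z = c \<otimes> t [^] i" using z gen_closed by (simp add: c_def m_assoc)
  have "inv c \<otimes> (a \<otimes> c) = a" using abelian[OF a c(1)] c mem_carrier[OF a] by simp
  then have "inv c \<otimes> (a \<otimes> (c \<otimes> t [^] i)) = a \<otimes> t [^] i"
    using c mem_carrier[OF a] gen_closed by (simp add: m_assoc[symmetric])
  then show ?thesis
    unfolding z_eq using c mem_carrier[OF a] gen_closed by (simp add: m_assoc inv_mult_group)
qed

definition tconj :: "'a \<Rightarrow> 'a" where
  "tconj x = inv t \<otimes> x \<otimes> t"

definition theta :: "'a \<Rightarrow> 'a" where
  "theta x = inv x \<otimes> tconj x"

lemma tconj_closed: "x \<in> A \<Longrightarrow> tconj x \<in> A"
  unfolding tconj_def using inv_op_closed1 gen_closed by simp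

lemma theta_closed: "x \<in> A \<Longrightarrow> theta x \<in> A"
  unfolding theta_def using tconj_closed A_inv_closed A_mult_closed by simp

lemma tconj_eq_mult_theta: "x \<in> A \<Longrightarrow> tconj x = x \<otimes> theta x"
  unfolding theta_def using tconj_closed mem_carrier by simp

lemma theta_mult:
  assumes x: "x \<in> A" and y: "y \<in> A"
  shows "theta (x \<otimes> y) = theta x \<otimes> theta y"
proof -
  have c: "x \<in> carrier G" "y \<in> carrier G" "tconj x \<in> carrier G" "tconj y \<in> carrier G"
    "theta x \<in> carrier G"
    using x y tconj_closed theta_closed mem_carrier by auto
  have "theta (x \<otimes> y) = (inv y \<otimes> theta x) \<otimes> tconj y"
    unfolding theta_def tconj_def using c gen_closed by (simp add: inv_mult_group m_assoc)
  also have "inv y \<otimes> theta x = theta x \<otimes> inv y"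
    using abelian x y A_inv_closed theta_closed by blast
  finally show ?thesis using c by (simp add: theta_def m_assoc)
qed

lemma theta_one [simp]: "theta \<one> = \<one>"
  unfolding theta_def tconj_def using gen_closed by simp

lemma theta_nat_pow: "x \<in> A \<Longrightarrow> theta (x [^] (k::nat)) = theta x [^] k"
  by (induction k) (auto simp: theta_mult A_pow_closed)

lemma theta_hom: "theta \<in> hom GA GA"
  unfolding hom_def using theta_closed theta_mult by auto

lemma funpow_tconj: "x \<in> A \<Longrightarrow> (tconj ^^ k) x = inv (t [^] k) \<otimes> x \<otimes> t [^] k"
  by (induction k) (use gen_closed mem_carrier in \<open>auto simp: tconj_def inv_mult_group m_assoc\<close>)

lemma funpow_tconj_q: "x \<in> A \<Longrightarrow> (tconj ^^ q) x = x"
  using funpow_tconj abelian[OF _ gen_pow_q_mem] mem_carrier gen_closed by (simp add: m_assoc)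

lemma funpow_theta_eq_one:
  fixes p :: nat
  assumes p: "Factorial_Ring.prime p" and q: "q = p ^ n" and x: "x \<in> A" "x [^] p = \<one>"
  shows "(theta ^^ q) x = \<one>"
proof -
  interpret GA: comm_group GA by (rule comm_group_GA)
  have "((\<lambda>y. y \<otimes> theta y) ^^ k) x = (tconj ^^ k) x \<and> (tconj ^^ k) x \<in> A" for k
    by (induction k) (use x in \<open>auto simp: tconj_eq_mult_theta tconj_closed theta_closed A_mult_closed\<close>)
  then have "(theta ^^ q) x \<otimes> x = x"
    using GA.funpow_mult_hom_prime_power[OF p theta_hom, of x n] x funpow_tconj_q
    by (simp add: q flip: nat_pow_consistent)
  moreover have "(theta ^^ q) x \<in> carrier G"
    using GA.funpow_hom_closed[OF theta_hom, of x q] x mem_carrier by simp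
  ultimately show ?thesis using x mem_carrier by simp
qed

lemma twisted_class_conj_subset:
  assumes a: "a \<in> A"
  shows "twisted_class_e G (\<lambda>z. a \<otimes> z \<otimes> inv a)
           \<subseteq> (\<lambda>i. inv (t [^] i) \<otimes> a \<otimes> t [^] i \<otimes> inv a) ` {..<q}"
proof
  fix s assume "s \<in> twisted_class_e G (\<lambda>z. a \<otimes> z \<otimes> inv a)"
  then obtain z where z: "z \<in> carrier G" "s = inv z \<otimes> (a \<otimes> z \<otimes> inv a)"
    unfolding twisted_class_e_def by blast
  obtain i :: nat where i: "i < q" "z \<otimes> inv (t [^] i) \<in> A" using coset_rep[OF z(1)] by blast
  have "s = inv z \<otimes> a \<otimes> z \<otimes> inv a" using z mem_carrier[OF a] by (simp add: m_assoc)
  also have "\<dots> = inv (t [^] i) \<otimes> a \<otimes> t [^] i \<otimes> inv a"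
    using conj_coset_rep[OF z(1) i(2) a] by simp
  finally show "s \<in> (\<lambda>i. inv (t [^] i) \<otimes> a \<otimes> t [^] i \<otimes> inv a) ` {..<q}" using i(1) by blast
qed

lemma twisted_class_conj_finite: "a \<in> A \<Longrightarrow> finite (twisted_class_e G (\<lambda>z. a \<otimes> z \<otimes> inv a))"
  by (rule finite_surj[OF finite_lessThan twisted_class_conj_subset])

lemma twisted_class_conj_card:
  assumes "a \<in> A"
  shows "card (twisted_class_e G (\<lambda>z. a \<otimes> z \<otimes> inv a)) \<le> q"
proof -
  have "card (twisted_class_e G (\<lambda>z. a \<otimes> z \<otimes> inv a))
          \<le> card ((\<lambda>i. inv (t [^] i) \<otimes> a \<otimes> t [^] i \<otimes> inv a) ` {..<q})"
    by (rule card_mono[OF finite_imageI[OF finite_lessThan] twisted_class_conj_subset[OF assms]])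
  also have "\<dots> \<le> q"
    using card_image_le[OF finite_lessThan] card_lessThan by metis
  finally show ?thesis .
qed

lemma theta_mem_twisted_class_conj:
  assumes a: "a \<in> A"
  shows "theta a \<in> twisted_class_e G (\<lambda>z. a \<otimes> z \<otimes> inv a)"
proof -
  have "theta a = tconj a \<otimes> inv a"
    unfolding theta_def using abelian[OF A_inv_closed[OF a] tconj_closed[OF a]] .
  also have "\<dots> = inv t \<otimes> (a \<otimes> t \<otimes> inv a)"
    unfolding tconj_def using gen_closed mem_carrier[OF a] by (simp add: m_assoc)
  finally show ?thesis unfolding twisted_class_e_def using gen_closed by blast
qed

end

text \<open>
  \<open>twist\<close> is the automorphism fixing \<open>A\<close> pointwise and sending \<open>t\<close> to \<open>tb\<close>, so it maps
  \<open>g \<in> A t\<^sup>i\<close> to \<open>g t\<^sup>-\<^sup>i (tb)\<^sup>i\<close>; the two exponent conditions say \<open>(tb)\<^sup>q = t\<^sup>q\<close>, which makes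
  this independent of the choice of \<open>i\<close>.
\<close>

locale twisted_automorphism = abelian_by_cyclic +
  fixes b :: 'a
  assumes b_mem: "b \<in> A" and theta_theta_b: "theta (theta b) = \<one>"
    and b_pow_q: "b [^] q = \<one>" and theta_b_pow: "theta b [^] (q choose 2) = \<one>"
begin

definition cocycle :: "nat \<Rightarrow> 'a" where
  "cocycle k = inv (t [^] k) \<otimes> (t \<otimes> b) [^] k"

definition twist :: "'a \<Rightarrow> 'a" where
  "twist g = g \<otimes> cocycle (SOME i::nat. g \<otimes> inv (t [^] i) \<in> A)"

lemma cocycle_closed: "cocycle k \<in> carrier G"
  unfolding cocycle_def using gen_closed mem_carrier[OF b_mem] by simp

lemma cocycle_add: "cocycle (i + j) = inv (t [^] j) \<otimes> cocycle i \<otimes> t [^] j \<otimes> cocycle j"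
proof -
  have c: "t [^] i \<in> carrier G" "t [^] j \<in> carrier G" "(t \<otimes> b) [^] i \<in> carrier G" "(t \<otimes> b) [^] j \<in> carrier G"
    using gen_closed mem_carrier[OF b_mem] by auto
  have "cocycle (i + j) = inv (t [^] j) \<otimes> (inv (t [^] i) \<otimes> (t \<otimes> b) [^] i) \<otimes> (t \<otimes> b) [^] j"
    unfolding cocycle_def using gen_closed mem_carrier[OF b_mem] c
    by (simp add: nat_pow_mult[symmetric] inv_mult_group m_assoc)
  also have "\<dots> = inv (t [^] j) \<otimes> cocycle i \<otimes> t [^] j \<otimes> cocycle j"
    unfolding cocycle_def[of i] cocycle_def[of j] using c by (simp add: m_assoc)
  finally show ?thesis .
qed

lemma theta_b_closed: "theta b \<in> A"
  using theta_closed[OF b_mem] .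

lemma cocycle_eq: "cocycle k = b [^] k \<otimes> theta b [^] (k choose 2)"
proof (induction k)
  case 0
  then show ?case by (simp add: cocycle_def numeral_2_eq_2)
next
  case (Suc k)
  let ?c = "theta b"
  have bc: "b \<in> carrier G" "?c \<in> carrier G" using b_mem theta_b_closed mem_carrier by auto
  have kA: "cocycle k \<in> A" using Suc A_pow_closed A_mult_closed b_mem theta_b_closed by simp
  have "cocycle (Suc k) = tconj (cocycle k) \<otimes> b"
    using cocycle_add[of k 1] gen_closed bc by (simp add: tconj_def cocycle_def)
  also have "\<dots> = cocycle k \<otimes> ?c [^] k \<otimes> b"
  proof -
    have "theta (cocycle k) = ?c [^] k \<otimes> theta ?c [^] (k choose 2)"
      unfolding Suc by (simp add: theta_mult theta_nat_pow A_pow_closed b_mem theta_b_closed)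
    then show ?thesis using tconj_eq_mult_theta[OF kA] theta_theta_b bc by simp
  qed
  also have "\<dots> = b [^] k \<otimes> (b \<otimes> (?c [^] (k choose 2) \<otimes> ?c [^] k))"
  proof -
    have "?c [^] (k choose 2) \<otimes> ?c [^] k \<otimes> b = b \<otimes> (?c [^] (k choose 2) \<otimes> ?c [^] k)"
      by (rule abelian) (auto simp: A_mult_closed A_pow_closed theta_b_closed b_mem)
    then show ?thesis unfolding Suc using bc by (simp add: m_assoc)
  qed
  also have "\<dots> = b [^] Suc k \<otimes> ?c [^] (Suc k choose 2)"
  proof -
    have "Suc k choose 2 = (k choose 2) + k"
      using binomial_Suc_Suc[of k 1] by (simp add: numeral_2_eq_2)
    then show ?thesis using bc by (simp add: m_assoc nat_pow_mult)
  qed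
  finally show ?case .
qed

lemma cocycle_mem: "cocycle k \<in> A"
  unfolding cocycle_eq using A_pow_closed A_mult_closed b_mem theta_b_closed by simp

lemma theta_cocycle: "theta (cocycle k) = theta b [^] k"
  unfolding cocycle_eq
  using theta_theta_b mem_carrier[OF theta_b_closed]
  by (simp add: theta_mult theta_nat_pow A_pow_closed b_mem theta_b_closed)

lemma cocycle_add_q: "cocycle (k + q) = cocycle k"
proof -
  have "cocycle q = \<one>"
    unfolding cocycle_eq using b_pow_q theta_b_pow by simp
  then have "cocycle (k + q) = inv (t [^] q) \<otimes> (cocycle k \<otimes> t [^] q)"
    using cocycle_add[of k q] gen_closed cocycle_closed by (simp add: m_assoc)
  also have "cocycle k \<otimes> t [^] q = t [^] q \<otimes> cocycle k"
    by (rule abelian[OF cocycle_mem gen_pow_q_mem])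
  finally show ?thesis using gen_closed cocycle_closed by simp
qed

lemma cocycle_mod: "cocycle (k mod q) = cocycle k"
proof -
  have "cocycle (i + q * d) = cocycle i" for i d
  proof (induction d)
    case (Suc d)
    have "i + q * Suc d = (i + q * d) + q" by simp
    then show ?case using Suc cocycle_add_q by metis
  qed simp
  from this[of "k mod q" "k div q"] show ?thesis by simp
qed

lemma twist_eq:
  assumes g: "g \<in> carrier G" and i: "g \<otimes> inv (t [^] (i::nat)) \<in> A"
  shows "twist g = g \<otimes> cocycle i"
proof -
  have "g \<otimes> inv (t [^] (SOME i::nat. g \<otimes> inv (t [^] i) \<in> A)) \<in> A"
    using i by (rule someI)
  then show ?thesis
    unfolding twist_def using coset_rep_mod[OF g _ i] cocycle_mod by metis
qed

lemma twist_gen: "twist t = t \<otimes> b"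
  using twist_eq[OF gen_closed, of 1] gen_closed subgroup.one_closed[OF subgroup_axioms]
    mem_carrier[OF b_mem]
  by (simp add: cocycle_def)

lemma twisted_class_twist: "twisted_class_e G twist \<subseteq> range cocycle"
proof
  fix x assume "x \<in> twisted_class_e G twist"
  then obtain z where z: "z \<in> carrier G" "x = inv z \<otimes> twist z"
    unfolding twisted_class_e_def by blast
  obtain i :: nat where "z \<otimes> inv (t [^] i) \<in> A" using coset_rep[OF z(1)] by blast
  then have "x = cocycle i" using z twist_eq cocycle_closed by simp
  then show "x \<in> range cocycle" by simp
qed

lemma twist_hom: "twist \<in> hom G G"
proof (rule homI)
  fix g h assume g: "g \<in> carrier G" and h: "h \<in> carrier G"
  obtain i :: nat where i: "g \<otimes> inv (t [^] i) \<in> A" using coset_rep[OF g] by blast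
  obtain j :: nat where j: "h \<otimes> inv (t [^] j) \<in> A" using coset_rep[OF h] by blast
  have tc: "t [^] i \<in> carrier G" "t [^] j \<in> carrier G" using gen_closed by auto
  define a where "a = h \<otimes> inv (t [^] j)"
  have a: "a \<in> A" "a \<in> carrier G" using j mem_carrier by (auto simp: a_def)
  have h_eq: "h = a \<otimes> t [^] j" using h tc by (simp add: a_def m_assoc)
  have "(g \<otimes> inv (t [^] i)) \<otimes> (t [^] i \<otimes> a \<otimes> inv (t [^] i)) \<in> A"
    using A_mult_closed[OF i inv_op_closed2[OF tc(1) a(1)]] .
  also have "(g \<otimes> inv (t [^] i)) \<otimes> (t [^] i \<otimes> a \<otimes> inv (t [^] i)) = (g \<otimes> h) \<otimes> inv (t [^] (i + j))"
    unfolding h_eq using g tc a gen_closed by (simp add: nat_pow_mult[symmetric] inv_mult_group m_assoc)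
  finally have "twist (g \<otimes> h) = g \<otimes> h \<otimes> cocycle (i + j)"
    using twist_eq g h by simp
  also have "\<dots> = g \<otimes> (a \<otimes> (cocycle i \<otimes> (t [^] j \<otimes> cocycle j)))"
    unfolding cocycle_add h_eq using g tc a cocycle_closed by (simp add: m_assoc)
  also have "a \<otimes> (cocycle i \<otimes> (t [^] j \<otimes> cocycle j)) = cocycle i \<otimes> (a \<otimes> (t [^] j \<otimes> cocycle j))"
    using abelian[OF a(1) cocycle_mem] a cocycle_closed tc by (simp add: m_assoc[symmetric])
  also have "g \<otimes> (cocycle i \<otimes> (a \<otimes> (t [^] j \<otimes> cocycle j))) = twist g \<otimes> twist h"
    using twist_eq[OF g i] twist_eq[OF h j] unfolding h_eq using g a tc cocycle_closed
    by (simp add: m_assoc)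
  finally show "twist (g \<otimes> h) = twist g \<otimes> twist h" .
qed (auto simp: twist_def cocycle_closed)

lemma twist_iso: "twist \<in> iso G G"
proof -
  interpret twist: group_hom G G twist by unfold_locales (rule twist_hom)
  have "kernel G G twist \<subseteq> {\<one>}"
  proof
    fix g assume "g \<in> kernel G G twist"
    then have g: "g \<in> carrier G" "twist g = \<one>" unfolding kernel_def by auto
    obtain i :: nat where i: "g \<otimes> inv (t [^] i) \<in> A" using coset_rep[OF g(1)] by blast
    have "g = inv (cocycle i)"
      using twist_eq[OF g(1) i] g cocycle_closed by (metis inv_equality)
    then have "g \<otimes> inv (t [^] (0::nat)) \<in> A" using A_inv_closed cocycle_mem cocycle_closed by simp
    then have "twist g = g \<otimes> cocycle 0" by (rule twist_eq[OF g(1)])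
    then show "g \<in> {\<one>}" using g by (simp add: cocycle_def)
  qed
  then have "inj_on twist (carrier G)"
    by (intro twist.trivial_ker_imp_inj) (auto simp: kernel_def)
  moreover have "carrier G \<subseteq> twist ` carrier G"
  proof
    fix g assume g: "g \<in> carrier G"
    obtain i :: nat where i: "g \<otimes> inv (t [^] i) \<in> A" using coset_rep[OF g] by blast
    have tc: "t [^] i \<in> carrier G" using gen_closed by simp
    have "(g \<otimes> inv (t [^] i)) \<otimes> (t [^] i \<otimes> inv (cocycle i) \<otimes> inv (t [^] i)) \<in> A"
      using A_mult_closed[OF i inv_op_closed2[OF tc A_inv_closed[OF cocycle_mem]]] .
    then have "g \<otimes> inv (cocycle i) \<otimes> inv (t [^] i) \<in> A"
      using g tc cocycle_closed by (simp add: m_assoc)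
    then have "twist (g \<otimes> inv (cocycle i)) = g"
      using twist_eq g cocycle_closed by (simp add: m_assoc)
    then show "g \<in> twist ` carrier G" using g cocycle_closed by (metis image_eqI inv_closed m_closed)
  qed
  ultimately show ?thesis
    using twist_hom twist.hom_closed by (auto simp: iso_def bij_betw_def)
qed

end

locale cyclic_p_extension = abelian_by_cyclic A G t "p ^ n"
  for A and G (structure) and t and p n :: nat +
  assumes prime: "Factorial_Ring.prime p" and p_gt_2: "p > 2" and n_pos: "n \<ge> 1"
    and card_A: "\<exists>m. card A = p ^ m"
    and twisted_class_subgroup: "\<And>\<phi>. \<phi> \<in> iso G G \<Longrightarrow> subgroup (twisted_class_e G \<phi>) G"
begin

lemma theta_pow_eq_one:
  assumes a: "a \<in> A"
  shows "theta a [^] (p ^ n) = \<one>"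
proof -
  define S where "S = twisted_class_e G (\<lambda>z. a \<otimes> z \<otimes> inv a)"
  have S: "subgroup S G"
    unfolding S_def using twisted_class_subgroup conjugation_iso mem_carrier[OF a] by blast
  have S_fin: "finite S" unfolding S_def by (rule twisted_class_conj_finite[OF a])
  have card_S: "card S \<le> p ^ n" unfolding S_def by (rule twisted_class_conj_card[OF a])
  have theta_a: "theta a \<in> S" unfolding S_def by (rule theta_mem_twisted_class_conj[OF a])
  obtain m where m: "card A = p ^ m" using card_A by blast
  then have "card A > 0" using prime_gt_0_nat[OF prime] by simp
  then have "finite A" using card_gt_0_iff by blast
  then have "theta a [^] (p ^ m) = \<one>"
    using subgroup_pow_card_eq_one[OF subgroup_axioms _ theta_closed[OF a]] m by simp
  moreover have "theta a [^] card S = \<one>"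
    using subgroup_pow_card_eq_one[OF S S_fin theta_a] .
  moreover have "0 < card S" using S_fin theta_a card_gt_0_iff by blast
  ultimately show ?thesis
    using pow_prime_power_eq_one[OF mem_carrier[OF theta_closed[OF a]] prime] card_S by blast
qed

lemma odd_p: "odd p"
  using prime p_gt_2 by (simp add: prime_odd_nat)

lemma pow_p_eq_one_imp_pow_q_eq_one:
  assumes "x \<in> carrier G" "x [^] p = \<one>"
  shows "x [^] (p ^ n) = \<one>" "x [^] (p ^ n choose 2) = \<one>"
proof -
  have q_mod: "p ^ n mod p = 0 mod p" using n_pos by (simp add: power_eq_if)
  show "x [^] (p ^ n) = \<one>" using nat_pow_eq_if_mod_eq[OF assms q_mod] by simp
  have "(p ^ n choose 2) mod p = 0 mod p"
    using choose_two_mod_odd[OF odd_p q_mod] by (simp add: numeral_2_eq_2)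
  from nat_pow_eq_if_mod_eq[OF assms this] show "x [^] (p ^ n choose 2) = \<one>" by simp
qed

lemma twisted_automorphism_if_pow_p_eq_one:
  assumes "b \<in> A" "b [^] p = \<one>" "theta (theta b) = \<one>"
  shows "twisted_automorphism A G t (p ^ n) b"
proof -
  have "theta b [^] p = \<one>" using theta_nat_pow[OF assms(1), of p] assms(2) by simp
  then show ?thesis
    using assms theta_closed mem_carrier pow_p_eq_one_imp_pow_q_eq_one
    by (intro twisted_automorphism.intro abelian_by_cyclic_axioms twisted_automorphism_axioms.intro)
      auto
qed

lemma theta_eq_one_if_theta_theta_eq_one:
  assumes b: "b \<in> A" "b [^] p = \<one>" and theta_theta: "theta (theta b) = \<one>"
  shows "theta b = \<one>"
proof (rule ccontr)
  define c where "c = theta b"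
  assume "theta b \<noteq> \<one>"
  then have c_ne: "c \<noteq> \<one>" by (simp add: c_def)
  have bc: "b \<in> carrier G" and cc: "c \<in> carrier G"
    using b theta_closed mem_carrier by (auto simp: c_def)
  have c_pow: "c [^] p = \<one>" using theta_nat_pow[OF b(1), of p] b(2) by (simp add: c_def)
  then have ord_c: "ord c = p" using ord_eq_prime[OF cc prime _ c_ne] by simp
  interpret twisted_automorphism A G t "p ^ n" b
    using twisted_automorphism_if_pow_p_eq_one[OF b theta_theta] .
  have "b = inv t \<otimes> twist t" using twist_gen gen_closed bc by simp
  then have "b \<in> twisted_class_e G twist"
    unfolding twisted_class_e_def using gen_closed by blast
  then have "b \<otimes> b \<in> twisted_class_e G twist"
    using subgroup.m_closed[OF twisted_class_subgroup[OF twist_iso]] by blast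
  then obtain i where bb: "b \<otimes> b = cocycle i" using twisted_class_twist by blast
  then have "c [^] (2::nat) = c [^] i"
    using theta_cocycle theta_mult[OF b(1) b(1)] cc by (simp add: c_def numeral_2_eq_2)
  then have i_mod: "i mod p = 2 mod p" using nat_pow_eq_iff_mod_ord[OF cc] ord_c by simp
  then have "(i choose 2) mod p = 1 mod p"
    using choose_two_mod_odd[OF odd_p] by (simp add: numeral_2_eq_2)
  then have "c [^] (i choose 2) = c [^] (1::nat)" by (rule nat_pow_eq_if_mod_eq[OF cc c_pow])
  moreover have "b [^] i = b [^] (2::nat)" by (rule nat_pow_eq_if_mod_eq[OF bc b(2) i_mod])
  ultimately have "(b \<otimes> b) \<otimes> c = b \<otimes> b"
    using bb cocycle_eq[of i] bc cc by (simp add: c_def numeral_2_eq_2)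
  then show False using c_ne l_cancel_one[of "b \<otimes> b" c] bc cc by simp
qed

lemma theta_eq_one_if_funpow_eq_one:
  "x \<in> A \<Longrightarrow> x [^] p = \<one> \<Longrightarrow> (theta ^^ k) x = \<one> \<Longrightarrow> theta x = \<one>"
proof (induction k arbitrary: x)
  case (Suc k)
  have "theta x \<in> A" "theta x [^] p = \<one>"
    using Suc.prems(1,2) theta_closed theta_nat_pow[of x p] by auto
  moreover have "(theta ^^ k) (theta x) = \<one>"
    using Suc.prems(3) by (simp add: funpow_swap1)
  ultimately have "theta (theta x) = \<one>" by (rule Suc.IH)
  with Suc.prems(1,2) show ?case by (rule theta_eq_one_if_theta_theta_eq_one)
qed simp

lemma theta_eq_one_if_pow_prime_eq_one:
  assumes "x \<in> A" "x [^] p = \<one>"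
  shows "theta x = \<one>"
  using theta_eq_one_if_funpow_eq_one[OF assms funpow_theta_eq_one[OF prime refl assms]] .

lemma theta_pow_prime_power_eq_one:
  "a \<in> A \<Longrightarrow> a [^] (p ^ Suc k) = \<one> \<Longrightarrow> theta a [^] (p ^ k) = \<one>"
proof (induction k arbitrary: a)
  case 0
  then show ?case using theta_eq_one_if_pow_prime_eq_one by simp
next
  case (Suc k)
  have "(a [^] p) [^] (p ^ Suc k) = \<one>"
    using Suc.prems mem_carrier by (simp add: nat_pow_pow flip: power_Suc)
  then have "theta (a [^] p) [^] (p ^ k) = \<one>"
    using Suc.IH Suc.prems(1) A_pow_closed by blast
  then show ?case
    using theta_nat_pow[OF Suc.prems(1)] theta_closed[OF Suc.prems(1)] mem_carrier
    by (simp add: nat_pow_pow)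
qed

lemma theta_image_subset_Omega: "theta ` A \<subseteq> Omega G p A n"
  unfolding Omega_def using theta_closed theta_pow_eq_one by auto

lemma theta_Omega_subset:
  assumes "1 \<le> k"
  shows "theta ` Omega G p A k \<subseteq> Omega G p A (k - 1)"
proof -
  obtain j where "k = Suc j" using assms by (cases k) auto
  then show ?thesis
    unfolding Omega_def using theta_closed theta_pow_prime_power_eq_one by auto
qed

end

theorem mainTheorem12:
  fixes G :: "('a, 'b) monoid_scheme" and A :: "'a set" and t :: 'a and p n :: nat
  assumes "group G"
    and "Factorial_Ring.prime p" and "p > 2" and "n \<ge> 1"
    and "A \<lhd> G"
    and "finite A"
    and "\<forall>a\<in>A. \<forall>b\<in>A. a \<otimes>\<^bsub>G\<^esub> b = b \<otimes>\<^bsub>G\<^esub> a"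
    and "\<exists>m. card A = p ^ m"
    and "t \<in> carrier G"
    and "(G Mod A) \<cong> integer_mod_group (p ^ n)"
    and "generate (G Mod A) {A #>\<^bsub>G\<^esub> t} = carrier (G Mod A)"
    and "\<forall>\<phi>\<in>iso G G. subgroup (twisted_class_e G \<phi>) G"
  shows "\<exists>\<theta>. \<theta> \<in> hom (G\<lparr>carrier := A\<rparr>) (G\<lparr>carrier := A\<rparr>)
            \<and> \<theta> ` A \<subseteq> Omega G p A n
            \<and> (\<forall>a\<in>A. inv\<^bsub>G\<^esub> t \<otimes>\<^bsub>G\<^esub> a \<otimes>\<^bsub>G\<^esub> t = a \<otimes>\<^bsub>G\<^esub> \<theta> a)
            \<and> (\<forall>k\<in>{1..n}. \<theta> ` Omega G p A k \<subseteq> Omega G p A (k - 1))"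
proof -
  interpret normal A G by (rule assms(5))
  have q_pos: "p ^ n > 0" using assms(2) prime_gt_0_nat by simp
  have "card (carrier (G Mod A)) = p ^ n"
    using iso_same_card[OF assms(10)] q_pos
    by (simp add: carrier_integer_mod_group flip: of_nat_power)
  then interpret abelian_by_cyclic A G t "p ^ n"
    using abelian_by_cyclicI assms(7,9,11) q_pos by blast
  interpret cyclic_p_extension A G t p n
    unfolding cyclic_p_extension_def cyclic_p_extension_axioms_def
    using abelian_by_cyclic_axioms assms(2-4,8,12) by blast
  show ?thesis
  proof (intro exI[of _ theta] conjI ballI)
    fix a assume "a \<in> A"
    then show "inv\<^bsub>G\<^esub> t \<otimes>\<^bsub>G\<^esub> a \<otimes>\<^bsub>G\<^esub> t = a \<otimes>\<^bsub>G\<^esub> theta a"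
      using tconj_eq_mult_theta by (simp add: tconj_def)
  qed (use theta_hom theta_image_subset_Omega theta_Omega_subset in auto)
qed

end
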